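(* For any fixed finite tree $T$ (with at least $2$ vertices), $$\lim_{k\to\infty}\delta(S_k,T)=1,$$ where $S_k$ is the star on $k$ vertices and $\delta(S,T)=\lim_{n\to\infty}\mathrm{TV}(\mathrm{PA}(n,S),\mathrm{PA}(n,T))$.
   Context: For $n\ge k\ge 2$ and a tree $T$ on $k$ vertices, the random tree $\mathrm{PA}(n,T)$ is defined inductively: $\mathrm{PA}(k,T)=T$, and $\mathrm{PA}(n+1,T)$ is obtained from $\mathrm{PA}(n,T)$ by adding a new vertex $u$ and one edge $uv$, where $v$ is chosen among the vertices of $\mathrm{PA}(n,T)$ with probability $d_{\mathrm{PA}(n,T)}(v)/(2(n-1))$ ($d_G(v)$ denotes degree). $\mathrm{TV}$ denotes total variation distance between the laws of the random trees (viewed up to isomorphism); $\mathrm{TV}(\mathrm{PA}(n,S),\mathrm{PA}(n,T))$ is non-increasing in $n$ for $n\ge\max(|S|,|T|)$, so the limit exists. *)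

theory Defs
  imports "HOL-Probability.Probability"
begin

text \<open>Graphs on vertex set {0..<n} are represented by their edge sets, each edge a
  2-element set of naturals.\<close>

definition is_tree :: "nat \<Rightarrow> nat set set \<Rightarrow> bool" where
  "is_tree k E \<longleftrightarrow>
     E \<subseteq> {{a, b} | a b. a < k \<and> b < k \<and> a \<noteq> b} \<and>
     card E = k - 1 \<and>
     (\<forall>a<k. \<forall>b<k. (a, b) \<in> {(x, y). {x, y} \<in> E}\<^sup>*)"

definition star :: "nat \<Rightarrow> nat set set" where
  "star k = {{0, i} | i. 0 < i \<and> i < k}"

text \<open>Multiset of half-edge endpoints: vertex v occurs deg(v) times.\<close>
definition endpoints :: "nat set set \<Rightarrow> nat multiset" where
  "endpoints E = (\<Sum>e\<in>E. mset_set e)"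

text \<open>One preferential attachment step from a tree on {0..<n}: the new vertex n is
  joined to v chosen with probability deg(v)/(2(n-1)).\<close>
definition PA_step :: "nat \<Rightarrow> nat set set \<Rightarrow> nat set set pmf" where
  "PA_step n E = map_pmf (\<lambda>v. insert {v, n} E) (pmf_of_multiset (endpoints E))"

primrec PA_iter :: "nat set set \<Rightarrow> nat \<Rightarrow> nat \<Rightarrow> nat set set pmf" where
  "PA_iter T k 0 = return_pmf T"
| "PA_iter T k (Suc m) = PA_iter T k m \<bind> PA_step (k + m)"

definition PA :: "nat \<Rightarrow> nat \<Rightarrow> nat set set \<Rightarrow> nat set set pmf" where
  "PA n k T = PA_iter T k (n - k)"

definition graph_iso :: "nat set set \<Rightarrow> nat set set \<Rightarrow> bool" where
  "graph_iso E E' \<longleftrightarrow> (\<exists>f. inj_on f (\<Union>E) \<and> (\<lambda>e. f ` e) ` E = E')"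

definition iso_class :: "nat set set \<Rightarrow> nat set set set" where
  "iso_class E = {E'. graph_iso E E'}"

definition TV :: "'a pmf \<Rightarrow> 'a pmf \<Rightarrow> real" where
  "TV p q = (SUP A. \<bar>measure_pmf.prob p A - measure_pmf.prob q A\<bar>)"

definition delta :: "nat \<Rightarrow> nat set set \<Rightarrow> nat \<Rightarrow> nat set set \<Rightarrow> real" where
  "delta ks S kt T =
     lim (\<lambda>n. TV (map_pmf iso_class (PA n ks S)) (map_pmf iso_class (PA n kt T)))"

end

theory Submission
  imports Defs "HOL-Real_Asymp.Real_Asymp"
begin

text \<open>Let \<open>D\<close> be the degree of vertex \<open>0\<close> and \<open>F = \<Sum>\<^sub>v d(v)(d(v)+1)(d(v)+2)\<close>. In one
  attachment step from size \<open>n\<close> the mean of \<open>D\<close> grows by the factor \<open>1 + 1/(2(n-1))\<close> and that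
  of \<open>F\<close> by \<open>1 + 3/(2(n-1))\<close>, i.e.\ asymptotically like the cube of the mean of \<open>D\<close>.
  Seeded with the star \<open>S\<^sub>m\<close>, \<open>D\<close> starts at \<open>m - 1\<close> and its variance stays \<open>O(\<mu>\<^sup>2/m)\<close>,
  so with probability \<open>1 - O(1/m)\<close> it exceeds half its mean \<open>\<mu>\<close>, whence
  \<open>F \<ge> D\<^sup>3 \<ge> \<mu>\<^sup>3/8\<close>. Seeded with a fixed tree \<open>T\<close>, the mean of \<open>F\<close> is only \<open>O(\<mu>\<^sup>3/m)\<close>,
  so by Markov \<open>F \<ge> \<mu>\<^sup>3/8\<close> has probability \<open>O(1/m)\<close>. As \<open>F\<close> is an isomorphism invariant,
  the total variation distance of the two laws up to isomorphism is \<open>1 - O(1/m)\<close> at every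
  size \<open>n \<ge> m\<close>, hence so is \<open>\<delta>(S\<^sub>m, T)\<close>.\<close>

text \<open>The only invariant of \<open>PA(n, T)\<close> the argument needs: \<open>n - 1\<close> proper edges on
  \<open>{0..<n}\<close>.\<close>

definition pa_graph :: "nat \<Rightarrow> nat set set \<Rightarrow> bool" where
  "pa_graph n E \<longleftrightarrow> 2 \<le> n \<and> finite E \<and> card E = n - 1 \<and>
     (\<forall>e\<in>E. \<exists>a b. e = {a, b} \<and> a \<noteq> b \<and> a < n \<and> b < n)"

abbreviation vertex_degree :: "nat set set \<Rightarrow> nat \<Rightarrow> nat" where
  "vertex_degree E v \<equiv> count (endpoints E) v"

lemma pa_graph_finite_edge: "pa_graph n E \<Longrightarrow> e \<in> E \<Longrightarrow> finite e"
  unfolding pa_graph_def by auto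

lemma pa_graph_vertices: "pa_graph n E \<Longrightarrow> \<Union>E \<subseteq> {..<n}"
  unfolding pa_graph_def by fastforce

lemma is_tree_imp_pa_graph:
  assumes "2 \<le> k" "is_tree k T"
  shows "pa_graph k T"
proof -
  have sub: "T \<subseteq> (\<lambda>(a, b). {a, b}) ` ({..<k} \<times> {..<k})"
    using assms(2) unfolding is_tree_def by auto
  then have "finite T"
    by (rule finite_subset) simp
  then show ?thesis
    using assms unfolding is_tree_def pa_graph_def by blast
qed

lemma set_mset_endpoints:
  assumes "pa_graph n E"
  shows "set_mset (endpoints E) = \<Union>E"
proof -
  have "finite E" using assms unfolding pa_graph_def by simp
  then show ?thesis
    using pa_graph_finite_edge[OF assms] by (simp add: endpoints_def set_mset_sum)
qed

lemma endpoints_less: "pa_graph n E \<Longrightarrow> v \<in># endpoints E \<Longrightarrow> v < n"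
  using set_mset_endpoints pa_graph_vertices by blast

lemma size_endpoints:
  assumes "pa_graph n E"
  shows "size (endpoints E) = 2 * (n - 1)"
proof -
  have "size (endpoints E) = (\<Sum>e\<in>E. card e)"
    by (simp add: endpoints_def)
  also have "\<dots> = (\<Sum>e\<in>E. 2)"
    using assms unfolding pa_graph_def by (intro sum.cong) auto
  finally show ?thesis
    using assms unfolding pa_graph_def by simp
qed

lemma endpoints_nonempty: "pa_graph n E \<Longrightarrow> endpoints E \<noteq> {#}"
  using size_endpoints[of n E] unfolding pa_graph_def by auto

lemma sum_vertex_degree:
  "pa_graph n E \<Longrightarrow> (\<Sum>v\<in>set_mset (endpoints E). real (vertex_degree E v)) = 2 * (real n - 1)"
  using size_endpoints[of n E] unfolding pa_graph_def
  by (simp add: size_multiset_overloaded_eq flip: of_nat_sum)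

lemma new_edge_notin:
  "pa_graph n E \<Longrightarrow> {v, n} \<notin> E"
  using pa_graph_vertices by blast

lemma endpoints_insert_new_edge:
  assumes "pa_graph n E" "v < n"
  shows "endpoints (insert {v, n} E) = endpoints E + {#v, n#}"
  using assms new_edge_notin[OF assms(1)] pa_graph_vertices[OF assms(1)]
  unfolding pa_graph_def endpoints_def by (auto simp: add.commute)

lemma pa_graph_insert_new_edge:
  assumes "pa_graph n E" "v < n"
  shows "pa_graph (Suc n) (insert {v, n} E)"
  using assms new_edge_notin[OF assms(1)]
  unfolding pa_graph_def by (fastforce intro: less_SucI)

lemma pa_graph_PA_step:
  assumes "pa_graph n E" "E' \<in> set_pmf (PA_step n E)"
  shows "pa_graph (Suc n) E'"
  using assms endpoints_nonempty[OF assms(1)] endpoints_less[OF assms(1)]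
  unfolding PA_step_def by (auto intro: pa_graph_insert_new_edge)

lemma finite_set_pmf_PA_step: "pa_graph n E \<Longrightarrow> finite (set_pmf (PA_step n E))"
  unfolding PA_step_def using endpoints_nonempty by auto

lemma pa_graph_PA_iter:
  "pa_graph k T \<Longrightarrow> E \<in> set_pmf (PA_iter T k j) \<Longrightarrow> pa_graph (k + j) E"
  by (induction j arbitrary: E) (auto dest: pa_graph_PA_step)

lemma finite_set_pmf_PA_iter: "pa_graph k T \<Longrightarrow> finite (set_pmf (PA_iter T k j))"
  by (induction j) (auto simp: finite_set_pmf_PA_step pa_graph_PA_iter)

lemma PA_Suc: "k \<le> n \<Longrightarrow> PA (Suc n) k T = PA n k T \<bind> PA_step n"
  unfolding PA_def by (simp add: Suc_diff_le)

lemma pa_graph_PA: "pa_graph k T \<Longrightarrow> k \<le> n \<Longrightarrow> E \<in> set_pmf (PA n k T) \<Longrightarrow> pa_graph n E"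
  unfolding PA_def using pa_graph_PA_iter[of k T E "n - k"] by simp

lemma finite_set_pmf_PA: "pa_graph k T \<Longrightarrow> finite (set_pmf (PA n k T))"
  unfolding PA_def by (rule finite_set_pmf_PA_iter)

section \<open>Isomorphism invariance\<close>

lemma graph_iso_refl: "graph_iso E E"
  unfolding graph_iso_def by (intro exI[of _ id]) auto

lemma graph_iso_trans:
  assumes "graph_iso A B" "graph_iso B C"
  shows "graph_iso A C"
proof -
  obtain f where f: "inj_on f (\<Union>A)" "(\<lambda>e. f ` e) ` A = B"
    using assms(1) unfolding graph_iso_def by blast
  obtain g where g: "inj_on g (\<Union>B)" "(\<lambda>e. g ` e) ` B = C"
    using assms(2) unfolding graph_iso_def by blast
  have "\<Union>B = f ` \<Union>A"
    using f(2) by auto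
  then have "inj_on (g \<circ> f) (\<Union>A)"
    using f(1) g(1) by (simp add: comp_inj_on)
  moreover have "(\<lambda>e. (g \<circ> f) ` e) ` A = C"
    using f(2) g(2) by (auto simp: image_comp[symmetric] image_image)
  ultimately show ?thesis
    unfolding graph_iso_def by blast
qed

lemma graph_iso_sym:
  assumes "graph_iso A B"
  shows "graph_iso B A"
proof -
  obtain f where f: "inj_on f (\<Union>A)" "(\<lambda>e. f ` e) ` A = B"
    using assms unfolding graph_iso_def by blast
  define h where "h = inv_into (\<Union>A) f"
  have "\<Union>B = f ` \<Union>A"
    using f(2) by auto
  then have "inj_on h (\<Union>B)"
    unfolding h_def by (simp add: inj_on_inv_into)
  moreover have "h ` f ` e = e" if "e \<in> A" for e
    unfolding h_def using f(1) that by (intro inv_into_image_cancel) auto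
  then have "(\<lambda>e. h ` e) ` B = A"
    unfolding f(2)[symmetric] image_image by simp
  ultimately show ?thesis
    unfolding graph_iso_def by blast
qed

lemma iso_class_eqI: "graph_iso A B \<Longrightarrow> iso_class A = iso_class B"
  unfolding iso_class_def using graph_iso_sym graph_iso_trans by blast

lemma self_in_iso_class: "E \<in> iso_class E"
  unfolding iso_class_def by (simp add: graph_iso_refl)

lemma image_mset_sum: "image_mset f (\<Sum>x\<in>A. g x) = (\<Sum>x\<in>A. image_mset f (g x))"
  by (induction A rule: infinite_finite_induct) auto

lemma endpoints_graph_image:
  assumes "pa_graph n E" "inj_on f (\<Union>E)"
  shows "endpoints ((\<lambda>e. f ` e) ` E) = image_mset f (endpoints E)"
proof -
  have "inj_on (\<lambda>e. f ` e) E"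
    using inj_on_image_eq_iff[OF assms(2)] by (auto simp: inj_on_def)
  then have "endpoints ((\<lambda>e. f ` e) ` E) = (\<Sum>e\<in>E. mset_set (f ` e))"
    unfolding endpoints_def by (simp add: sum.reindex)
  also have "\<dots> = (\<Sum>e\<in>E. image_mset f (mset_set e))"
    using inj_on_subset[OF assms(2)] by (intro sum.cong refl) (simp add: image_mset_mset_set Union_upper)
  finally show ?thesis
    unfolding endpoints_def image_mset_sum .
qed

lemma graph_iso_endpoints:
  assumes "pa_graph n E" "graph_iso E E'"
  obtains f where "inj_on f (\<Union>E)" "(\<lambda>e. f ` e) ` E = E'"
    "endpoints E' = image_mset f (endpoints E)"
  using assms endpoints_graph_image unfolding graph_iso_def by blast

lemma pmf_of_multiset_image_mset:
  assumes "M \<noteq> {#}"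
  shows "pmf_of_multiset (image_mset f M) = map_pmf f (pmf_of_multiset M)"
proof (rule pmf_eqI)
  fix y
  have "pmf (map_pmf f (pmf_of_multiset M)) y = measure (pmf_of_multiset M) (f -` {y} \<inter> set_mset M)"
    using measure_Int_set_pmf[of "pmf_of_multiset M" "f -` {y}"] assms by (simp add: pmf_map Int_commute)
  also have "\<dots> = (\<Sum>x\<in>f -` {y} \<inter> set_mset M. count M x / size M)"
    using assms by (subst measure_measure_pmf_finite) auto
  also have "\<dots> = count (image_mset f M) y / size M"
    by (simp add: count_image_mset sum_divide_distrib)
  finally show "pmf (pmf_of_multiset (image_mset f M)) y = pmf (map_pmf f (pmf_of_multiset M)) y"
    using assms by simp
qed

lemma graph_iso_insert_pendant_edge:
  assumes f: "inj_on f (\<Union>E)" "(\<lambda>e. f ` e) ` E = E'"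
    and fresh: "n \<notin> \<Union>E" "n \<notin> \<Union>E'" and v: "v \<in> \<Union>E"
  shows "graph_iso (insert {v, n} E) (insert {f v, n} E')"
proof -
  define g where "g = f(n := n)"
  have g_eq: "g x = f x" if "x \<in> \<Union>E" for x
    using fresh(1) that unfolding g_def by auto
  have "inj_on g (\<Union>E)"
    using f(1) inj_on_cong[of "\<Union>E" g f] g_eq by blast
  moreover have "g ` \<Union>E = \<Union>E'"
    using f(2) g_eq by auto
  moreover have "\<Union>(insert {v, n} E) = insert n (\<Union>E)"
    using v by auto
  moreover have "g n = n"
    by (simp add: g_def)
  ultimately have "inj_on g (\<Union>(insert {v, n} E))"
    using fresh by (simp add: inj_on_insert)
  moreover have "(\<lambda>e. g ` e) ` E = E'"
    unfolding f(2)[symmetric] using g_eq by (intro image_cong) auto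
  moreover have "g ` {v, n} = {f v, n}"
    using g_eq[OF v] \<open>g n = n\<close> by simp
  ultimately show ?thesis
    unfolding graph_iso_def by (intro exI[of _ g]) simp
qed

lemma map_iso_class_PA_step:
  assumes E: "pa_graph n E" and E': "pa_graph n E'" and iso: "graph_iso E E'"
  shows "map_pmf iso_class (PA_step n E') = map_pmf iso_class (PA_step n E)"
proof -
  obtain f where f: "inj_on f (\<Union>E)" "(\<lambda>e. f ` e) ` E = E'"
    and ep: "endpoints E' = image_mset f (endpoints E)"
    using graph_iso_endpoints[OF E iso] .
  have fresh: "n \<notin> \<Union>E" "n \<notin> \<Union>E'"
    using pa_graph_vertices[OF E] pa_graph_vertices[OF E'] by auto
  have class_eq: "iso_class (insert {f v, n} E') = iso_class (insert {v, n} E)"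
    if "v \<in> set_pmf (pmf_of_multiset (endpoints E))" for v
    using that endpoints_nonempty[OF E] set_mset_endpoints[OF E]
    by (intro iso_class_eqI graph_iso_sym[OF graph_iso_insert_pendant_edge[OF f fresh]]) simp
  show ?thesis
    unfolding PA_step_def ep pmf_of_multiset_image_mset[OF endpoints_nonempty[OF E]] pmf.map_comp
    by (rule map_pmf_cong) (simp_all add: class_eq)
qed

section \<open>Total variation distance\<close>

lemma abs_prob_diff_le_1: "\<bar>measure_pmf.prob p A - measure_pmf.prob q A\<bar> \<le> 1"
proof -
  have "0 \<le> measure_pmf.prob p A" "measure_pmf.prob p A \<le> 1"
    "0 \<le> measure_pmf.prob q A" "measure_pmf.prob q A \<le> 1"
    by auto
  then show ?thesis
    unfolding abs_le_iff by linarith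
qed

lemma prob_diff_le_TV: "\<bar>measure_pmf.prob p A - measure_pmf.prob q A\<bar> \<le> TV p q"
proof -
  have "bdd_above (range (\<lambda>A. \<bar>measure_pmf.prob p A - measure_pmf.prob q A\<bar>))"
    by (rule bdd_aboveI[of _ 1]) (auto simp: abs_prob_diff_le_1)
  then show ?thesis
    unfolding TV_def by (rule cSUP_upper[rotated]) simp
qed

lemma TV_le_1: "TV p q \<le> 1"
  unfolding TV_def
  by (rule cSUP_least) (simp_all add: abs_prob_diff_le_1)

lemma TV_nonneg: "0 \<le> TV p q"
  using prob_diff_le_TV[of p "{}" q] by simp

lemma TV_commute: "TV p q = TV q p"
  unfolding TV_def by (simp add: abs_minus_commute)

lemma prob_bind_pmf_finite:
  assumes "finite U" "set_pmf p \<subseteq> U" "\<And>x. x \<in> U \<Longrightarrow> finite (set_pmf (K x))"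
  shows "measure_pmf.prob (p \<bind> K) A = (\<Sum>x\<in>U. pmf p x * measure_pmf.prob (K x) A)"
proof -
  have "measure_pmf.prob (p \<bind> K) A = measure_pmf.expectation (p \<bind> K) (indicator A)"
    by simp
  also have "\<dots> = (\<Sum>x\<in>U. pmf p x *\<^sub>R measure_pmf.expectation (K x) (indicator A))"
    using assms by (intro pmf_expectation_bind) auto
  finally show ?thesis
    by simp
qed

text \<open>Averaging the \<open>[0, 1]\<close>-valued function \<open>x \<mapsto> prob (K x) A\<close> against \<open>p - q\<close> gains at
  most the positive part of \<open>p - q\<close>, i.e.\ the probability difference on \<open>{x. q x < p x}\<close>.\<close>

lemma prob_bind_diff_le_TV:
  assumes "finite (set_pmf p)" "finite (set_pmf q)"
    "\<And>x. x \<in> set_pmf p \<union> set_pmf q \<Longrightarrow> finite (set_pmf (K x))"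
  shows "measure_pmf.prob (p \<bind> K) A - measure_pmf.prob (q \<bind> K) A \<le> TV p q"
proof -
  define U where "U = set_pmf p \<union> set_pmf q"
  define g where "g x = measure_pmf.prob (K x) A" for x
  define P where "P = {x\<in>U. pmf q x < pmf p x}"
  have U: "finite U"
    using assms unfolding U_def by auto
  have "measure_pmf.prob (p \<bind> K) A = (\<Sum>x\<in>U. pmf p x * g x)"
    "measure_pmf.prob (q \<bind> K) A = (\<Sum>x\<in>U. pmf q x * g x)"
    using prob_bind_pmf_finite[OF U, of p K A] prob_bind_pmf_finite[OF U, of q K A] assms(3)
    unfolding g_def U_def by auto
  then have "measure_pmf.prob (p \<bind> K) A - measure_pmf.prob (q \<bind> K) A
      = (\<Sum>x\<in>U. (pmf p x - pmf q x) * g x)"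
    by (simp add: sum_subtractf left_diff_distrib)
  also have "\<dots> \<le> (\<Sum>x\<in>U. if x \<in> P then pmf p x - pmf q x else 0)"
  proof (rule sum_mono)
    fix x assume "x \<in> U"
    have "0 \<le> g x" "g x \<le> 1"
      unfolding g_def by auto
    then show "(pmf p x - pmf q x) * g x \<le> (if x \<in> P then pmf p x - pmf q x else 0)"
      using \<open>x \<in> U\<close> unfolding P_def by (auto simp: mult_left_le mult_nonpos_nonneg)
  qed
  also have "\<dots> = measure_pmf.prob p P - measure_pmf.prob q P"
    using U unfolding P_def
    by (simp add: sum.If_cases Int_def measure_measure_pmf_finite sum_subtractf)
  also have "\<dots> \<le> TV p q"
    using prob_diff_le_TV[of p P q] by simp
  finally show ?thesis .
qed

lemma TV_bind_pmf_le:
  assumes "finite (set_pmf p)" "finite (set_pmf q)"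
    "\<And>x. x \<in> set_pmf p \<union> set_pmf q \<Longrightarrow> finite (set_pmf (K x))"
  shows "TV (p \<bind> K) (q \<bind> K) \<le> TV p q"
  unfolding TV_def[of "p \<bind> K"]
proof (rule cSUP_least)
  fix A
  show "\<bar>measure_pmf.prob (p \<bind> K) A - measure_pmf.prob (q \<bind> K) A\<bar> \<le> TV p q"
    using prob_bind_diff_le_TV[of p q K A] prob_bind_diff_le_TV[of q p K A] assms TV_commute[of p q]
    by (simp add: abs_le_iff Un_commute)
qed simp

text \<open>Since \<open>PA_step\<close> commutes with isomorphism, the law of \<open>iso_class (PA (n + 1) k T)\<close> is
  obtained from that of \<open>iso_class (PA n k T)\<close> by one common kernel, whichever seed was used.\<close>

definition PA_class_step :: "nat \<Rightarrow> nat set set set \<Rightarrow> nat set set set pmf" where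
  "PA_class_step n c = map_pmf iso_class (PA_step n (SOME E. E \<in> c \<and> pa_graph n E))"

lemma PA_class_step_iso_class:
  assumes "pa_graph n E"
  shows "PA_class_step n (iso_class E) = map_pmf iso_class (PA_step n E)"
proof -
  define E' where "E' = (SOME E'. E' \<in> iso_class E \<and> pa_graph n E')"
  have "E \<in> iso_class E \<and> pa_graph n E"
    using assms self_in_iso_class by simp
  then have "E' \<in> iso_class E \<and> pa_graph n E'"
    unfolding E'_def by (rule someI)
  then have "graph_iso E E'" "pa_graph n E'"
    by (simp_all add: iso_class_def)
  then show ?thesis
    unfolding PA_class_step_def E'_def[symmetric] by (simp add: map_iso_class_PA_step[OF assms])
qed

lemma map_iso_class_PA_Suc:
  assumes "pa_graph k T" "k \<le> n"
  shows "map_pmf iso_class (PA (Suc n) k T) = map_pmf iso_class (PA n k T) \<bind> PA_class_step n"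
proof -
  have "map_pmf iso_class (PA (Suc n) k T) = PA n k T \<bind> (\<lambda>E. map_pmf iso_class (PA_step n E))"
    using PA_Suc[OF assms(2)] by (simp add: map_bind_pmf)
  also have "\<dots> = PA n k T \<bind> (\<lambda>E. PA_class_step n (iso_class E))"
    using PA_class_step_iso_class pa_graph_PA[OF assms] by (intro bind_pmf_cong) auto
  finally show ?thesis
    by (simp add: bind_map_pmf)
qed

lemma TV_PA_class_Suc_le:
  assumes "pa_graph ks S" "pa_graph kt T" "ks \<le> n" "kt \<le> n"
  shows "TV (map_pmf iso_class (PA (Suc n) ks S)) (map_pmf iso_class (PA (Suc n) kt T))
       \<le> TV (map_pmf iso_class (PA n ks S)) (map_pmf iso_class (PA n kt T))"
  unfolding map_iso_class_PA_Suc[OF assms(1,3)] map_iso_class_PA_Suc[OF assms(2,4)]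
proof (rule TV_bind_pmf_le)
  fix c
  assume "c \<in> set_pmf (map_pmf iso_class (PA n ks S)) \<union> set_pmf (map_pmf iso_class (PA n kt T))"
  then obtain E where "c = iso_class E" "pa_graph n E"
    using pa_graph_PA[OF assms(1,3)] pa_graph_PA[OF assms(2,4)] by auto
  then show "finite (set_pmf (PA_class_step n c))"
    by (simp add: PA_class_step_iso_class finite_set_pmf_PA_step)
qed (simp_all add: finite_set_pmf_PA assms)

lemma TV_PA_class_tendsto_delta:
  assumes "pa_graph ks S" "pa_graph kt T"
  shows "(\<lambda>n. TV (map_pmf iso_class (PA n ks S)) (map_pmf iso_class (PA n kt T)))
           \<longlonglongrightarrow> delta ks S kt T"
proof -
  define X where "X n = TV (map_pmf iso_class (PA n ks S)) (map_pmf iso_class (PA n kt T))" for n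
  define N where "N = max ks kt"
  have "decseq (\<lambda>j. X (j + N))"
    unfolding decseq_Suc_iff X_def N_def
    using TV_PA_class_Suc_le[OF assms] by (simp add: add.commute)
  then obtain L where "(\<lambda>j. X (j + N)) \<longlonglongrightarrow> L"
    using TV_nonneg unfolding X_def by (blast intro: decseq_convergent)
  then have "X \<longlonglongrightarrow> L"
    by (rule LIMSEQ_offset)
  then show ?thesis
    unfolding delta_def X_def[abs_def] by (simp add: limI)
qed

section \<open>Degree statistics under one attachment step\<close>

lemma expectation_pmf_finite:
  "finite (set_pmf P) \<Longrightarrow>
     measure_pmf.expectation P (f :: _ \<Rightarrow> real) = (\<Sum>x\<in>set_pmf P. pmf P x * f x)"
  by (subst integral_measure_pmf[of "set_pmf P"]) auto

lemma expectation_PA_step: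
  assumes "pa_graph n E"
  shows "measure_pmf.expectation (PA_step n E) (\<phi> :: _ \<Rightarrow> real) =
    (\<Sum>v\<in>set_mset (endpoints E). real (vertex_degree E v) * \<phi> (insert {v, n} E)) / (2 * (real n - 1))"
proof -
  have ne: "endpoints E \<noteq> {#}"
    using endpoints_nonempty[OF assms] .
  have "real (size (endpoints E)) = 2 * (real n - 1)"
    using size_endpoints[OF assms] assms unfolding pa_graph_def by auto
  then show ?thesis
    using ne unfolding PA_step_def
    by (simp add: expectation_pmf_finite sum_divide_distrib)
qed

lemma vertex_degree_insert_new_edge:
  assumes "pa_graph n E" "v < n"
  shows "vertex_degree (insert {v, n} E) x =
           vertex_degree E x + (if x = v then 1 else 0) + (if x = n then 1 else 0)"
  using endpoints_insert_new_edge[OF assms] by auto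

definition root_degree :: "nat set set \<Rightarrow> real" where
  "root_degree E = real (vertex_degree E 0)"

definition cubic_degree_sum :: "nat set set \<Rightarrow> real" where
  "cubic_degree_sum E = (\<Sum>v\<in>set_mset (endpoints E). pochhammer (real (vertex_degree E v)) 3)"

lemma pochhammer_3: "pochhammer (x :: real) 3 = x * (x + 1) * (x + 2)"
  by (simp add: pochhammer_Suc eval_nat_numeral)

lemma pochhammer_3_nonneg: "0 \<le> pochhammer (real d) 3"
  by (simp add: pochhammer_3)

lemma cubic_degree_sum_nonneg: "0 \<le> cubic_degree_sum E"
  unfolding cubic_degree_sum_def by (intro sum_nonneg pochhammer_3_nonneg)

lemma root_degree_cube_le_cubic_degree_sum: "root_degree E ^ 3 \<le> cubic_degree_sum E"
proof (cases "0 \<in># endpoints E")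
  case True
  have "root_degree E ^ 3 \<le> pochhammer (real (vertex_degree E 0)) 3"
    unfolding root_degree_def pochhammer_3 by (simp add: power3_eq_cube mult_mono)
  also have "\<dots> \<le> cubic_degree_sum E"
    unfolding cubic_degree_sum_def using True by (rule member_le_sum) (simp_all add: pochhammer_3_nonneg)
  finally show ?thesis .
next
  case False
  then show ?thesis
    unfolding root_degree_def using cubic_degree_sum_nonneg by (simp add: not_in_iff)
qed

lemma root_degree_insert_new_edge:
  assumes "pa_graph n E" "v \<in># endpoints E"
  shows "root_degree (insert {v, n} E) = root_degree E + (if v = 0 then 1 else 0)"
  using vertex_degree_insert_new_edge[OF assms(1) endpoints_less[OF assms], of 0] assms(1)
  unfolding root_degree_def pa_graph_def by auto

lemma sum_count_mult_if_0:
  "(\<Sum>v\<in>set_mset M. real (count M v) * (if v = 0 then c else 0)) = real (count M 0) * c"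
  by (simp add: if_distrib[of "\<lambda>x. _ * x"] sum.delta not_in_iff cong: if_cong)

lemma expectation_root_degree_PA_step:
  assumes "pa_graph n E"
  shows "measure_pmf.expectation (PA_step n E) root_degree =
           (1 + 1 / (2 * (real n - 1))) * root_degree E"
proof -
  have n: "real n - 1 > 0"
    using assms unfolding pa_graph_def by auto
  have "(\<Sum>v\<in>set_mset (endpoints E). real (vertex_degree E v) * root_degree (insert {v, n} E))
     = (\<Sum>v\<in>set_mset (endpoints E). real (vertex_degree E v) * root_degree E
          + real (vertex_degree E v) * (if v = 0 then 1 else 0))"
    using root_degree_insert_new_edge[OF assms] by (intro sum.cong) (auto simp: algebra_simps)
  also have "\<dots> = root_degree E * (2 * (real n - 1)) + root_degree E"
    by (simp add: sum.distrib sum_count_mult_if_0 sum_vertex_degree[OF assms]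
        flip: sum_distrib_right) (simp add: root_degree_def mult.commute)
  finally show ?thesis
    using n by (simp add: expectation_PA_step[OF assms] field_simps)
qed

lemma expectation_root_degree_sq_PA_step:
  assumes "pa_graph n E"
  shows "measure_pmf.expectation (PA_step n E) (\<lambda>E. root_degree E ^ 2) =
     (1 + 1 / (real n - 1)) * root_degree E ^ 2 + 1 / (2 * (real n - 1)) * root_degree E"
proof -
  define d where "d = real n - 1"
  have d: "d > 0"
    using assms unfolding pa_graph_def d_def by auto
  have "(\<Sum>v\<in>set_mset (endpoints E). real (vertex_degree E v) * root_degree (insert {v, n} E) ^ 2)
     = (\<Sum>v\<in>set_mset (endpoints E). real (vertex_degree E v) * root_degree E ^ 2
          + real (vertex_degree E v) * (if v = 0 then 2 * root_degree E + 1 else 0))"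
    using root_degree_insert_new_edge[OF assms]
    by (intro sum.cong) (auto simp: algebra_simps power2_eq_square)
  also have "\<dots> = root_degree E ^ 2 * (2 * (real n - 1)) + root_degree E * (2 * root_degree E + 1)"
    by (simp add: sum.distrib sum_count_mult_if_0 sum_vertex_degree[OF assms]
        flip: sum_distrib_right) (simp add: root_degree_def mult.commute)
  finally have sum: "(\<Sum>v\<in>set_mset (endpoints E). real (vertex_degree E v) * root_degree (insert {v, n} E) ^ 2)
      = root_degree E ^ 2 * (2 * (real n - 1)) + root_degree E * (2 * root_degree E + 1)" .
  show ?thesis
    unfolding expectation_PA_step[OF assms] sum d_def[symmetric]
    using d by (simp add: field_simps power2_eq_square)
qed

text \<open>The increment of \<open>d(d+1)(d+2)\<close> at the chosen vertex is \<open>3(d+1)(d+2)\<close>, and averaging it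
  against the weights \<open>d\<close> reproduces \<open>3\<close> times the statistic itself.\<close>

lemma cubic_degree_sum_insert_new_edge:
  assumes "pa_graph n E" "v \<in># endpoints E"
  defines "d \<equiv> real (vertex_degree E v)"
  shows "cubic_degree_sum (insert {v, n} E) = cubic_degree_sum E + 6 + 3 * (d + 1) * (d + 2)"
proof -
  let ?M = "endpoints E" and ?M' = "endpoints (insert {v, n} E)"
  have v: "v < n"
    using endpoints_less[OF assms(1,2)] .
  have n: "n \<notin># ?M"
    using endpoints_less[OF assms(1)] by blast
  have set_M': "set_mset ?M' = insert n (set_mset ?M)"
    using endpoints_insert_new_edge[OF assms(1) v] assms(2) by auto
  have deg_M': "count ?M' x = count ?M x" if "x \<in># ?M" "x \<noteq> v" for x
    using vertex_degree_insert_new_edge[OF assms(1) v, of x] n that by auto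
  have "count ?M' n = 1" "count ?M' v = count ?M v + 1"
    using vertex_degree_insert_new_edge[OF assms(1) v] n v by (auto simp: not_in_iff)
  then have "cubic_degree_sum (insert {v, n} E)
      = pochhammer 1 3 + (\<Sum>x\<in>set_mset ?M. pochhammer (real (count ?M' x)) 3)"
    unfolding cubic_degree_sum_def set_M' using n by simp
  also have "(\<Sum>x\<in>set_mset ?M. pochhammer (real (count ?M' x)) 3)
      = pochhammer (d + 1) 3 + (\<Sum>x\<in>set_mset ?M - {v}. pochhammer (real (count ?M' x)) 3)"
    using assms(2) \<open>count ?M' v = count ?M v + 1\<close> unfolding d_def
    by (simp add: sum.remove[of _ v] add.commute)
  also have "(\<Sum>x\<in>set_mset ?M - {v}. pochhammer (real (count ?M' x)) 3)
      = cubic_degree_sum E - pochhammer d 3"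
    unfolding cubic_degree_sum_def d_def using deg_M' assms(2)
    by (simp add: sum.remove[of _ v])
  finally show ?thesis
    by (simp add: pochhammer_3 algebra_simps)
qed

lemma expectation_cubic_degree_sum_PA_step:
  assumes "pa_graph n E"
  shows "measure_pmf.expectation (PA_step n E) cubic_degree_sum =
           (1 + 3 / (2 * (real n - 1))) * cubic_degree_sum E + 6"
proof -
  have n: "real n - 1 > 0"
    using assms unfolding pa_graph_def by auto
  have "(\<Sum>v\<in>set_mset (endpoints E). real (vertex_degree E v) * cubic_degree_sum (insert {v, n} E))
     = (\<Sum>v\<in>set_mset (endpoints E). real (vertex_degree E v) * (cubic_degree_sum E + 6)
          + 3 * pochhammer (real (vertex_degree E v)) 3)"
    using cubic_degree_sum_insert_new_edge[OF assms]
    by (intro sum.cong) (auto simp: algebra_simps pochhammer_3)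
  also have "\<dots> = (cubic_degree_sum E + 6) * (2 * (real n - 1)) + 3 * cubic_degree_sum E"
    by (simp add: sum.distrib sum_vertex_degree[OF assms] cubic_degree_sum_def
        flip: sum_distrib_right sum_distrib_left)
  finally show ?thesis
    using n by (simp add: expectation_PA_step[OF assms] field_simps)
qed

section \<open>Moments along the process\<close>

text \<open>\<open>pa_growth a k j\<close> is the factor by which a statistic whose conditional mean grows by
  \<open>1 + a / (2(n - 1))\<close> per step is multiplied from size \<open>k\<close> to size \<open>k + j\<close>.\<close>

definition pa_growth :: "real \<Rightarrow> nat \<Rightarrow> nat \<Rightarrow> real" where
  "pa_growth a k j = (\<Prod>i<j. 1 + a / (2 * (real (k + i) - 1)))"

lemma pa_growth_0 [simp]: "pa_growth a k 0 = 1"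
  by (simp add: pa_growth_def)

lemma pa_growth_Suc: "pa_growth a k (Suc j) = pa_growth a k j * (1 + a / (2 * (real (k + j) - 1)))"
  by (simp add: pa_growth_def)

lemma pa_growth_add: "pa_growth a k (i + j) = pa_growth a k i * pa_growth a (k + i) j"
  by (induction j) (simp_all add: pa_growth_Suc add.assoc mult.assoc)

lemma one_le_pa_growth: "2 \<le> k \<Longrightarrow> 0 \<le> a \<Longrightarrow> 1 \<le> pa_growth a k j"
  unfolding pa_growth_def by (rule prod_ge_1) auto

lemma pa_growth_3_le_cube:
  assumes "2 \<le> k"
  shows "pa_growth 3 k j \<le> pa_growth 1 k j ^ 3"
proof (induction j)
  case (Suc j)
  define y where "y = 1 / (2 * (real (k + j) - 1))"
  have "0 \<le> y"
    using assms unfolding y_def by simp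
  then have "1 + 3 * y \<le> (1 + y) ^ 3"
    by (simp add: power3_eq_cube algebra_simps)
  then have "pa_growth 3 k j * (1 + 3 * y) \<le> pa_growth 1 k j ^ 3 * (1 + y) ^ 3"
    using Suc one_le_pa_growth[OF assms, of 3 j] one_le_pa_growth[OF assms, of 1 j] \<open>0 \<le> y\<close>
    by (intro mult_mono) auto
  then show ?case
    unfolding pa_growth_Suc y_def by (simp add: power_mult_distrib)
qed simp

lemma pa_growth_3_le_square:
  assumes "2 \<le> k"
  shows "pa_growth 3 k j \<le> ((real (k + j) - 1) / (real k - 1)) ^ 2"
proof (induction j)
  case (Suc j)
  define e where "e = real (k + j) - 1"
  define K where "K = real k - 1"
  have e: "1 \<le> e" "0 < K"
    using assms unfolding e_def K_def by auto
  have "pa_growth 3 k (Suc j) = pa_growth 3 k j * (1 + 3 / (2 * e))"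
    unfolding pa_growth_Suc e_def ..
  also have "\<dots> \<le> (e / K) ^ 2 * (1 + 3 / (2 * e))"
    using Suc e unfolding e_def K_def by (intro mult_right_mono) auto
  also have "\<dots> = (e ^ 2 + 3 / 2 * e) / K ^ 2"
    using e by (simp add: field_simps power2_eq_square)
  also have "\<dots> \<le> (e + 1) ^ 2 / K ^ 2"
    using e by (intro divide_right_mono) (auto simp: power2_eq_square algebra_simps)
  also have "\<dots> = ((real (k + Suc j) - 1) / (real k - 1)) ^ 2"
    unfolding e_def K_def by (simp add: power_divide)
  finally show ?case .
qed (use assms in simp)

lemma pa_growth_3_le_star:
  assumes "2 \<le> k" "k \<le> m" "m \<le> N"
  shows "pa_growth 3 k (N - k) \<le> ((real m - 1) / (real k - 1)) ^ 2 * pa_growth 1 m (N - m) ^ 3"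
proof -
  have "pa_growth 3 k (N - k) = pa_growth 3 k (m - k) * pa_growth 3 m (N - m)"
    using pa_growth_add[of 3 k "m - k" "N - m"] assms by simp
  also have "\<dots> \<le> ((real m - 1) / (real k - 1)) ^ 2 * pa_growth 1 m (N - m) ^ 3"
    using pa_growth_3_le_square[OF assms(1), of "m - k"] pa_growth_3_le_cube[of m "N - m"]
      one_le_pa_growth[of m 3 "N - m"] assms
    by (intro mult_mono) auto
  finally show ?thesis .
qed

lemma expectation_PA_iter_Suc:
  fixes f g :: "nat set set \<Rightarrow> real"
  assumes T: "pa_graph k T"
    and step: "\<And>E. pa_graph (k + j) E \<Longrightarrow> measure_pmf.expectation (PA_step (k + j) E) f = g E"
  shows "measure_pmf.expectation (PA_iter T k (Suc j)) f = measure_pmf.expectation (PA_iter T k j) g"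
proof -
  let ?P = "PA_iter T k j"
  have "measure_pmf.expectation (PA_iter T k (Suc j)) f
      = (\<Sum>E\<in>set_pmf ?P. pmf ?P E * measure_pmf.expectation (PA_step (k + j) E) f)"
    using finite_set_pmf_PA_iter[OF T] pa_graph_PA_iter[OF T] finite_set_pmf_PA_step
    by (simp add: pmf_expectation_bind[of "set_pmf ?P"])
  also have "\<dots> = measure_pmf.expectation ?P g"
    using step pa_graph_PA_iter[OF T] finite_set_pmf_PA_iter[OF T]
    by (simp add: expectation_pmf_finite)
  finally show ?thesis .
qed

lemma expectation_root_degree_PA_iter:
  assumes T: "pa_graph k T"
  shows "measure_pmf.expectation (PA_iter T k j) root_degree = pa_growth 1 k j * root_degree T"
proof (induction j)
  case (Suc j)
  have "measure_pmf.expectation (PA_iter T k (Suc j)) root_degree =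
      measure_pmf.expectation (PA_iter T k j) (\<lambda>E. (1 + 1 / (2 * (real (k + j) - 1))) * root_degree E)"
    by (rule expectation_PA_iter_Suc[OF T]) (rule expectation_root_degree_PA_step)
  then show ?case
    using Suc by (simp add: pa_growth_Suc)
qed simp

lemma expectation_cubic_degree_sum_PA_iter:
  assumes T: "pa_graph k T"
  shows "measure_pmf.expectation (PA_iter T k j) cubic_degree_sum + 12 * (real (k + j) - 1)
           = pa_growth 3 k j * (cubic_degree_sum T + 12 * (real k - 1))"
proof (induction j)
  case (Suc j)
  define d where "d = real (k + j) - 1"
  define b where "b = measure_pmf.expectation (PA_iter T k j) cubic_degree_sum"
  define C where "C = cubic_degree_sum T + 12 * (real k - 1)"
  have "d > 0"
    using T unfolding pa_graph_def d_def by auto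
  have "measure_pmf.expectation (PA_iter T k (Suc j)) cubic_degree_sum
      = measure_pmf.expectation (PA_iter T k j) (\<lambda>E. (1 + 3 / (2 * d)) * cubic_degree_sum E + 6)"
    unfolding d_def by (rule expectation_PA_iter_Suc[OF T]) (rule expectation_cubic_degree_sum_PA_step)
  also have "\<dots> = (1 + 3 / (2 * d)) * b + 6"
    unfolding b_def using finite_set_pmf_PA_iter[OF T] by (simp add: integrable_measure_pmf_finite)
  finally have "measure_pmf.expectation (PA_iter T k (Suc j)) cubic_degree_sum + 12 * (real (k + Suc j) - 1)
      = (1 + 3 / (2 * d)) * b + 6 + 12 * (d + 1)"
    unfolding d_def by simp
  also have "\<dots> = (1 + 3 / (2 * d)) * (b + 12 * d)"
    using \<open>d > 0\<close> by (simp add: field_simps)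
  also have "b + 12 * d = pa_growth 3 k j * C"
    using Suc unfolding b_def d_def C_def by simp
  finally show ?case
    unfolding C_def[symmetric] pa_growth_Suc d_def by simp
qed simp

text \<open>The term \<open>- 3\<mu>/2\<close> absorbs the \<open>\<mu> / (2(n - 1))\<close> term of the recursion and makes the
  bound exact at the start.\<close>

lemma expectation_root_degree_sq_PA_iter_le:
  assumes T: "pa_graph k T" and D: "root_degree T > 0"
  defines "\<mu> j \<equiv> measure_pmf.expectation (PA_iter T k j) root_degree"
    and "c \<equiv> 3 / (2 * root_degree T)"
  shows "measure_pmf.expectation (PA_iter T k j) (\<lambda>E. root_degree E ^ 2) \<le> (1 + c) * \<mu> j ^ 2 - 3/2 * \<mu> j"
proof (induction j)
  case 0
  then show ?case
    using D unfolding \<mu>_def c_def by (simp add: field_simps power2_eq_square)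
next
  case (Suc j)
  define x where "x = 1 / (2 * (real (k + j) - 1))"
  define s where "s = measure_pmf.expectation (PA_iter T k j) (\<lambda>E. root_degree E ^ 2)"
  have x: "0 \<le> x"
    using T unfolding pa_graph_def x_def by auto
  have \<mu>: "0 \<le> \<mu> j" "\<mu> (Suc j) = \<mu> j * (1 + x)"
    using D one_le_pa_growth[of k 1 j] T unfolding \<mu>_def x_def expectation_root_degree_PA_iter[OF T]
    by (simp_all add: pa_graph_def pa_growth_Suc)
  have "measure_pmf.expectation (PA_iter T k (Suc j)) (\<lambda>E. root_degree E ^ 2)
      = measure_pmf.expectation (PA_iter T k j) (\<lambda>E. (1 + 2 * x) * root_degree E ^ 2 + x * root_degree E)"
    unfolding x_def
    by (rule expectation_PA_iter_Suc[OF T]) (simp add: expectation_root_degree_sq_PA_step divide_simps algebra_simps)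
  also have "\<dots> = (1 + 2 * x) * s + x * \<mu> j"
    unfolding s_def \<mu>_def using finite_set_pmf_PA_iter[OF T] by (simp add: integrable_measure_pmf_finite)
  also have "\<dots> \<le> (1 + 2 * x) * ((1 + c) * \<mu> j ^ 2 - 3/2 * \<mu> j) + x * \<mu> j"
    using Suc x unfolding s_def by (intro add_right_mono mult_left_mono) auto
  also have "\<dots> = (1 + c) * \<mu> (Suc j) ^ 2 - 3/2 * \<mu> (Suc j) - ((1 + c) * \<mu> j ^ 2 * x ^ 2 + 1/2 * \<mu> j * x)"
    unfolding \<mu>(2) by (simp add: algebra_simps power2_eq_square)
  also have "\<dots> \<le> (1 + c) * \<mu> (Suc j) ^ 2 - 3/2 * \<mu> (Suc j)"
  proof -
    have "0 \<le> c"
      using D unfolding c_def by simp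
    then have "0 \<le> (1 + c) * \<mu> j ^ 2 * x ^ 2 + 1/2 * \<mu> j * x"
      using x \<mu>(1) by (intro add_nonneg_nonneg mult_nonneg_nonneg) auto
    then show ?thesis
      by linarith
  qed
  finally show ?case .
qed

section \<open>Separating the star from a fixed seed\<close>

lemma cubic_degree_sum_graph_iso:
  assumes "pa_graph n E" "graph_iso E E'"
  shows "cubic_degree_sum E' = cubic_degree_sum E"
proof -
  obtain f where f: "inj_on f (\<Union>E)" and ep: "endpoints E' = image_mset f (endpoints E)"
    using graph_iso_endpoints[OF assms] by blast
  let ?M = "endpoints E"
  have inj: "inj_on f (set_mset ?M)"
    using f set_mset_endpoints[OF assms(1)] by simp
  have "count (image_mset f ?M) (f x) = count ?M x" if "x \<in># ?M" for x
  proof -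
    have "f -` {f x} \<inter> set_mset ?M = {x}"
      using inj that unfolding inj_on_def by auto
    then show ?thesis
      by (simp add: count_image_mset)
  qed
  then show ?thesis
    unfolding cubic_degree_sum_def ep by (simp add: sum.reindex[OF inj])
qed

lemma prob_map_iso_class_image:
  assumes "\<And>E E'. E \<in> set_pmf P \<Longrightarrow> graph_iso E E' \<Longrightarrow> E' \<in> A \<Longrightarrow> E \<in> A"
  shows "measure_pmf.prob (map_pmf iso_class P) (iso_class ` A) = measure_pmf.prob P A"
proof -
  have "iso_class -` iso_class ` A \<inter> set_pmf P = A \<inter> set_pmf P"
  proof (intro equalityI subsetI)
    fix E assume "E \<in> iso_class -` iso_class ` A \<inter> set_pmf P"
    then obtain E' where "E' \<in> A" "iso_class E = iso_class E'" "E \<in> set_pmf P"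
      by auto
    then show "E \<in> A \<inter> set_pmf P"
      using assms self_in_iso_class[of E'] unfolding iso_class_def by auto
  qed auto
  then show ?thesis
    by (metis measure_map_pmf measure_Int_set_pmf)
qed

lemma prob_map_iso_class_cubic_degree_sum:
  assumes "pa_graph k T" "k \<le> n"
  shows "measure_pmf.prob (map_pmf iso_class (PA n k T)) (iso_class ` {E. t \<le> cubic_degree_sum E})
           = measure_pmf.prob (PA n k T) {E. t \<le> cubic_degree_sum E}"
  using cubic_degree_sum_graph_iso pa_graph_PA[OF assms]
  by (intro prob_map_iso_class_image) fastforce

lemma prob_root_degree_le_half_mean:
  fixes j :: nat
  assumes T: "pa_graph k T" and D: "root_degree T > 0"
  defines "\<mu> \<equiv> measure_pmf.expectation (PA_iter T k j) root_degree"
  shows "measure_pmf.prob (PA_iter T k j) {E. root_degree E \<le> \<mu> / 2} \<le> 6 / root_degree T"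
proof -
  let ?P = "PA_iter T k j"
  have int: "integrable (measure_pmf ?P) f" for f :: "_ \<Rightarrow> real"
    using finite_set_pmf_PA_iter[OF T] by (rule integrable_measure_pmf_finite)
  have "\<mu> > 0"
    using D one_le_pa_growth[of k 1 j] T
    unfolding \<mu>_def expectation_root_degree_PA_iter[OF T] pa_graph_def by simp
  have "measure_pmf.prob ?P {E. root_degree E \<le> \<mu> / 2}
      \<le> measure_pmf.prob ?P {E. \<mu> / 2 \<le> \<bar>root_degree E - \<mu>\<bar>}"
    by (intro measure_pmf.finite_measure_mono) (auto simp: abs_if)
  also have "\<dots> \<le> measure_pmf.expectation ?P (\<lambda>E. (root_degree E - \<mu>) ^ 2) / (\<mu> / 2) ^ 2"
    using measure_pmf.Chebyshev_inequality[where M = ?P and f = root_degree and a = "\<mu> / 2"] int \<open>\<mu> > 0\<close>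
    unfolding \<mu>_def by simp
  also have "\<dots> = (measure_pmf.expectation ?P (\<lambda>E. root_degree E ^ 2) - \<mu> ^ 2) / (\<mu> / 2) ^ 2"
    unfolding \<mu>_def by (simp add: measure_pmf.variance_eq int)
  also have "\<dots> \<le> (3 / (2 * root_degree T) * \<mu> ^ 2 - 3/2 * \<mu>) / (\<mu> / 2) ^ 2"
    using expectation_root_degree_sq_PA_iter_le[OF T D, of j] unfolding \<mu>_def
    by (intro divide_right_mono) (simp_all add: algebra_simps)
  also have "\<dots> = 6 / root_degree T - 6 / \<mu>"
    using \<open>\<mu> > 0\<close> D by (simp add: field_simps power2_eq_square)
  also have "\<dots> \<le> 6 / root_degree T"
    using \<open>\<mu> > 0\<close> by simp
  finally show ?thesis .
qed

lemma prob_cubic_degree_sum_ge_PA_iter: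
  fixes j :: nat
  assumes T: "pa_graph k T" and D: "root_degree T > 0"
  defines "\<mu> \<equiv> measure_pmf.expectation (PA_iter T k j) root_degree"
  shows "1 - 6 / root_degree T \<le> measure_pmf.prob (PA_iter T k j) {E. \<mu> ^ 3 / 8 \<le> cubic_degree_sum E}"
proof -
  let ?P = "PA_iter T k j"
  have "\<mu> \<ge> 0"
    using D one_le_pa_growth[of k 1 j] T
    unfolding \<mu>_def expectation_root_degree_PA_iter[OF T] pa_graph_def by simp
  have "\<mu> ^ 3 / 8 \<le> cubic_degree_sum E" if "\<not> root_degree E \<le> \<mu> / 2" for E
  proof -
    have "(\<mu> / 2) ^ 3 \<le> root_degree E ^ 3"
      using that \<open>\<mu> \<ge> 0\<close> by (intro power_mono) auto
    then show ?thesis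
      using root_degree_cube_le_cubic_degree_sum[of E] by (simp add: power_divide)
  qed
  then have "1 - measure_pmf.prob ?P {E. root_degree E \<le> \<mu> / 2}
      \<le> measure_pmf.prob ?P {E. \<mu> ^ 3 / 8 \<le> cubic_degree_sum E}"
    by (subst measure_pmf.prob_compl[symmetric]) (auto intro!: measure_pmf.finite_measure_mono)
  then show ?thesis
    using prob_root_degree_le_half_mean[OF T D, of j] unfolding \<mu>_def by linarith
qed

lemma star_eq_image: "star m = (\<lambda>i. {0, i}) ` {1..<m}"
  unfolding star_def by auto

lemma inj_on_star_edge: "inj_on (\<lambda>i. {0 :: nat, i}) {1..<m}"
  unfolding inj_on_def by (auto simp: doubleton_eq_iff)

lemma pa_graph_star:
  assumes "2 \<le> m"
  shows "pa_graph m (star m)"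
proof -
  have "\<exists>a b. {0, i} = {a, b} \<and> a \<noteq> b \<and> a < m \<and> b < m" if "1 \<le> i" "i < m" for i
    using that by (intro exI[of _ 0] exI[of _ i]) auto
  then show ?thesis
    using assms unfolding pa_graph_def star_eq_image card_image[OF inj_on_star_edge] by auto
qed

lemma root_degree_star: "2 \<le> m \<Longrightarrow> root_degree (star m) = real m - 1"
proof -
  assume "2 \<le> m"
  have "endpoints (star m) = (\<Sum>i\<in>{1..<m}. mset_set {0, i})"
    unfolding endpoints_def star_eq_image by (subst sum.reindex[OF inj_on_star_edge]) simp
  then have "vertex_degree (star m) 0 = (\<Sum>i\<in>{1..<m}. 1)"
    by (simp add: count_sum)
  then show ?thesis
    unfolding root_degree_def using \<open>2 \<le> m\<close> by simp
qed

text \<open>\<open>(m - 1) \<cdot> pa_growth 1 m (N - m)\<close> is the mean degree of the centre of the star in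
  \<open>PA(N, S\<^sub>m)\<close>.\<close>

definition star_threshold :: "nat \<Rightarrow> nat \<Rightarrow> real" where
  "star_threshold m N = ((real m - 1) * pa_growth 1 m (N - m)) ^ 3 / 8"

lemma prob_PA_star_cubic_degree_sum_ge:
  assumes "3 \<le> m"
  shows "1 - 6 / (real m - 1)
           \<le> measure_pmf.prob (PA N m (star m)) {E. star_threshold m N \<le> cubic_degree_sum E}"
proof -
  have S: "pa_graph m (star m)" and D: "root_degree (star m) = real m - 1"
    using assms by (simp_all add: pa_graph_star root_degree_star)
  then show ?thesis
    using prob_cubic_degree_sum_ge_PA_iter[OF S, of "N - m"] assms
    unfolding PA_def star_threshold_def expectation_root_degree_PA_iter[OF S] D
    by (simp add: mult.commute)
qed

lemma expectation_cubic_degree_sum_PA_le: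
  assumes T: "pa_graph k T" and "k \<le> N"
  shows "measure_pmf.expectation (PA N k T) cubic_degree_sum
           \<le> pa_growth 3 k (N - k) * (cubic_degree_sum T + 12 * (real k - 1))"
  using expectation_cubic_degree_sum_PA_iter[OF T, of "N - k"] T assms(2)
  unfolding PA_def pa_graph_def by simp

text \<open>Up to size \<open>m\<close> the mean of \<open>F\<close> grows only quadratically in the size, against the cube in
  the threshold; this gap yields the factor \<open>1 / (m - 1)\<close>.\<close>

lemma prob_PA_cubic_degree_sum_ge_star_threshold:
  assumes T: "pa_graph k T" and m: "k \<le> m" "2 \<le> m" "m \<le> N"
  defines "C \<equiv> cubic_degree_sum T + 12 * (real k - 1)"
  shows "measure_pmf.prob (PA N k T) {E. star_threshold m N \<le> cubic_degree_sum E}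
           \<le> 8 * C / ((real k - 1) ^ 2 * (real m - 1))"
proof -
  define A where "A = pa_growth 1 m (N - m)"
  have k: "2 \<le> k"
    using T unfolding pa_graph_def by simp
  have A: "1 \<le> A"
    unfolding A_def using one_le_pa_growth m by simp
  have t: "star_threshold m N > 0"
    unfolding star_threshold_def A_def[symmetric] using A m by simp
  have "measure_pmf.expectation (PA N k T) cubic_degree_sum \<le> pa_growth 3 k (N - k) * C"
    unfolding C_def using expectation_cubic_degree_sum_PA_le[OF T] m by simp
  also have "\<dots> \<le> ((real m - 1) / (real k - 1)) ^ 2 * A ^ 3 * C"
    unfolding A_def using pa_growth_3_le_star[OF k m(1,3)] cubic_degree_sum_nonneg[of T] k
    by (intro mult_right_mono) (simp_all add: C_def)
  finally have expectation: "measure_pmf.expectation (PA N k T) cubic_degree_sum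
      \<le> ((real m - 1) / (real k - 1)) ^ 2 * A ^ 3 * C" .
  have "measure_pmf.prob (PA N k T) {E. star_threshold m N \<le> cubic_degree_sum E}
      \<le> measure_pmf.expectation (PA N k T) cubic_degree_sum / star_threshold m N"
    using integral_Markov_inequality_measure[of "measure_pmf (PA N k T)" cubic_degree_sum UNIV]
      finite_set_pmf_PA[OF T] t cubic_degree_sum_nonneg
    by (simp add: integrable_measure_pmf_finite)
  also have "\<dots> \<le> ((real m - 1) / (real k - 1)) ^ 2 * A ^ 3 * C / star_threshold m N"
    using expectation t by (simp add: divide_right_mono)
  also have "\<dots> = 8 * C / ((real k - 1) ^ 2 * (real m - 1))"
  proof -
    have "(M / K) ^ 2 * A ^ 3 * C / ((M * A) ^ 3 / 8) = 8 * C / (K ^ 2 * M)"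
      if "M > 0" "K > 0" for M K :: real
      using that A by (simp add: field_simps power2_eq_square power3_eq_cube)
    then show ?thesis
      unfolding star_threshold_def A_def[symmetric] using m k by simp
  qed
  finally show ?thesis .
qed

lemma TV_PA_star_ge:
  assumes T: "pa_graph k T" and m: "k \<le> m" "3 \<le> m" "m \<le> N"
  defines "C \<equiv> cubic_degree_sum T + 12 * (real k - 1)"
  shows "1 - (6 + 8 * C / (real k - 1) ^ 2) / (real m - 1)
           \<le> TV (map_pmf iso_class (PA N m (star m))) (map_pmf iso_class (PA N k T))"
proof -
  let ?B = "iso_class ` {E. star_threshold m N \<le> cubic_degree_sum E}"
  have "1 - (6 + 8 * C / (real k - 1) ^ 2) / (real m - 1)
      = 1 - 6 / (real m - 1) - 8 * C / ((real k - 1) ^ 2 * (real m - 1))"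
    by (simp add: add_divide_distrib diff_divide_distrib)
  also have "\<dots> \<le> measure_pmf.prob (map_pmf iso_class (PA N m (star m))) ?B
                  - measure_pmf.prob (map_pmf iso_class (PA N k T)) ?B"
    using prob_PA_star_cubic_degree_sum_ge[OF m(2), of N]
      prob_PA_cubic_degree_sum_ge_star_threshold[OF T m(1) _ m(3)] m
      prob_map_iso_class_cubic_degree_sum[OF pa_graph_star, of m N]
      prob_map_iso_class_cubic_degree_sum[OF T, of N]
    unfolding C_def by (simp del: measure_map_pmf)
  also have "\<dots> \<le> TV (map_pmf iso_class (PA N m (star m))) (map_pmf iso_class (PA N k T))"
    by (rule order_trans[OF abs_ge_self prob_diff_le_TV])
  finally show ?thesis .
qed

lemma delta_le_1:
  assumes "pa_graph ks S" "pa_graph kt T"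
  shows "delta ks S kt T \<le> 1"
  using TV_le_1 by (intro LIMSEQ_le_const2[OF TV_PA_class_tendsto_delta[OF assms]]) auto

lemma delta_star_ge:
  assumes T: "pa_graph k T" and m: "k \<le> m" "3 \<le> m"
  defines "C \<equiv> cubic_degree_sum T + 12 * (real k - 1)"
  shows "1 - (6 + 8 * C / (real k - 1) ^ 2) / (real m - 1) \<le> delta m (star m) k T"
  using TV_PA_star_ge[OF T m] m unfolding C_def
  by (intro LIMSEQ_le_const[OF TV_PA_class_tendsto_delta[OF pa_graph_star T]]) auto

theorem theorem3:
  fixes k :: nat and T :: "nat set set"
  assumes "2 \<le> k" and "is_tree k T"
  shows "(\<lambda>m. delta m (star m) k T) \<longlonglongrightarrow> 1"
proof -
  have T: "pa_graph k T"
    using is_tree_imp_pa_graph assms by blast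
  define K where "K = 6 + 8 * (cubic_degree_sum T + 12 * (real k - 1)) / (real k - 1) ^ 2"
  have "(\<lambda>m. 1 - K / (real m - 1)) \<longlonglongrightarrow> 1"
    by real_asymp
  then show ?thesis
  proof (rule tendsto_sandwich[OF _ _ _ tendsto_const, rotated 2])
    show "\<forall>\<^sub>F m in sequentially. 1 - K / (real m - 1) \<le> delta m (star m) k T"
      unfolding K_def using delta_star_ge[OF T]
      by (intro eventually_sequentiallyI[of "max k 3"]) simp
    show "\<forall>\<^sub>F m in sequentially. delta m (star m) k T \<le> 1"
      using delta_le_1[OF pa_graph_star T]
      by (intro eventually_sequentiallyI[of 2]) simp
  qed
qed

end
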